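(* In the setting of the context, let $\mathcal{C}=\sum_{j=1}^K\lambda_jP_j^{2/\alpha}C(\alpha,\Psi_j)$ and $s_{x_k}=\beta_k\|x_k\|^{\alpha}P_k^{-1}$, and let $\mathcal{A}_k=\sum_{i=0}^{\Delta_k-1}\frac{1}{i!}\int_{\mathbb{R}^2}(-s_{x_k})^i\frac{d^i}{ds^i}\mathcal{L}_I(s)\big|_{s=s_{x_k}}dx_k$. If $\Delta_k=1$, then $$\mathcal{A}_k=\frac{\pi P_k^{2/\alpha}\beta_k^{-2/\alpha}}{\sum_{j=1}^K\lambda_jP_j^{2/\alpha}C(\alpha,\Psi_j)}.$$ If $\Delta_k>1$, then $$\mathcal{A}_k=\sum_{i=0}^{\Delta_k-1}\frac{1}{i!}\sum_{\substack{j_1,\dots,j_i\ge0\\ j_1+2j_2+\cdots+ij_i=i}}\frac{i!}{j_1!\cdots j_i!}\int_{\mathbb{R}^2}(-s_{x_k})^ie^{-\mathcal{C}s_{x_k}^{2/\alpha}}\prod_{\ell=1}^i\frac{1}{(\ell!)^{j_\ell}}\Big(-\mathcal{C}s_{x_k}^{\frac{2}{\alpha}-\ell}\prod_{n=0}^{\ell-1}\big(\tfrac{2}{\alpha}-n\big)\Big)^{j_\ell}dx_k,$$ where for $i=0$ the inner sum consists of the single empty tuple with empty product equal to $1$.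
   Context: Tiers $k=1,\dots,K$ of base stations form independent homogeneous Poisson point processes in $\mathbb{R}^2$ with densities $\lambda_k>0$ and per-user transmit powers $P_k>0$; target SIRs $\beta_k>0$; path loss exponent $\alpha>2$; positive integer parameters $\Delta_k,\Psi_k$. Each BS at $y$ of tier $j$ carries an interfering channel-power mark $g_{jy}\sim\Gamma(\Psi_j,1)$ (Gamma with shape $\Psi_j$, scale $1$), i.i.d. and independent of the point processes. $\mathcal{L}_I(s)=\mathbb{E}[e^{-sI}]$ with $I=\sum_{j}\sum_{y\in\Phi_j}P_jg_{jy}\|y\|^{-\alpha}$, which equals $\exp(-s^{2/\alpha}\mathcal{C})$. $C(\alpha,\Psi)=\frac{2\pi}{\alpha}\sum_{m=1}^{\Psi}\binom{\Psi}{m}B\big(\Psi-m+\tfrac{2}{\alpha},m-\tfrac{2}{\alpha}\big)$ with $B$ Euler's Beta function. *)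

theory Defs
  imports "HOL-Analysis.Analysis"
begin

definition Ccoef :: "real \<Rightarrow> nat \<Rightarrow> real" where
  "Ccoef \<alpha> \<Psi> = 2 * pi / \<alpha> *
     (\<Sum>m = 1..\<Psi>. real (\<Psi> choose m) * Beta (real \<Psi> - real m + 2 / \<alpha>) (real m - 2 / \<alpha>))"

definition Ctot :: "nat \<Rightarrow> (nat \<Rightarrow> real) \<Rightarrow> (nat \<Rightarrow> real) \<Rightarrow> real \<Rightarrow> (nat \<Rightarrow> nat) \<Rightarrow> real" where
  "Ctot K lam P \<alpha> \<Psi> = (\<Sum>j = 1..K. lam j * P j powr (2 / \<alpha>) * Ccoef \<alpha> (\<Psi> j))"

definition LapI :: "real \<Rightarrow> real \<Rightarrow> real \<Rightarrow> real" where
  "LapI Cc \<alpha> s = exp (- (s powr (2 / \<alpha>)) * Cc)"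

definition sx :: "real \<Rightarrow> real \<Rightarrow> real \<Rightarrow> real ^ 2 \<Rightarrow> real" where
  "sx \<beta> Pk \<alpha> x = \<beta> * norm x powr \<alpha> / Pk"

definition Ak :: "real \<Rightarrow> real \<Rightarrow> real \<Rightarrow> real \<Rightarrow> nat \<Rightarrow> real" where
  "Ak Cc \<alpha> \<beta> Pk \<Delta> = (\<Sum>i < \<Delta>. 1 / fact i *
      (\<integral>x. (- sx \<beta> Pk \<alpha> x) ^ i * (deriv ^^ i) (LapI Cc \<alpha>) (sx \<beta> Pk \<alpha> x) \<partial>(lborel :: (real ^ 2) measure)))"

definition fdb_tuples :: "nat \<Rightarrow> (nat \<Rightarrow> nat) set" where
  "fdb_tuples i = {j \<in> PiE {1..i} (\<lambda>_. {..i}). (\<Sum>l = 1..i. l * j l) = i}"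

end

theory Submission
  imports Defs "HOL-Probability.Probability" "HOL-Computational_Algebra.Formal_Power_Series"
begin

text \<open>
  Write \<open>L\<^sub>I(s) = exp (g\<^sub>0(s))\<close> with \<open>g\<^sub>0(s) = -C s\<^sup>2\<^sup>/\<^sup>\<alpha>\<close> and let \<open>g\<^sub>l\<close> be the \<open>l\<close>-th
  derivative of \<open>g\<^sub>0\<close>. From \<open>L\<^sub>I' = g\<^sub>1 L\<^sub>I\<close> and Leibniz' rule, the normalised derivatives
  \<open>L\<^sub>I\<^sup>(\<^sup>m\<^sup>)(s) / (m! L\<^sub>I(s))\<close> satisfy the same recurrence as the coefficients of the power series
  \<open>exp (\<Sum>\<^sub>l g\<^sub>l(s) X\<^sup>l / l!) = \<Prod>\<^sub>l exp (g\<^sub>l(s) X\<^sup>l / l!)\<close>; expanding the product gives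
  Faa di Bruno's formula for \<open>L\<^sub>I\<^sup>(\<^sup>i\<^sup>)\<close>. Since \<open>s\<^sub>x\<^sup>2\<^sup>/\<^sup>\<alpha>\<close> is a multiple of \<open>\<parallel>x\<parallel>\<^sup>2\<close>, every
  summand evaluated at \<open>s\<^sub>x\<close> is, away from \<open>x = 0\<close>, a power of \<open>\<parallel>x\<parallel>\<^sup>2\<close> times a Gaussian.
  Hence each summand is integrable and the integral of the sum splits; for \<open>\<Delta>\<^sub>k = 1\<close> only the
  Gaussian integral \<open>\<pi> / \<kappa>\<close> of \<open>exp (-\<kappa> \<parallel>x\<parallel>\<^sup>2)\<close> over the plane remains.
\<close>

lemma has_bochner_integral_gaussian_real:
  fixes c :: real
  assumes "c > 0"
  shows "has_bochner_integral lborel (\<lambda>x::real. exp (- c * x\<^sup>2)) (sqrt (pi / c))"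
proof -
  define \<sigma> where "\<sigma> = sqrt (1 / (2 * c))"
  have "\<sigma> > 0" and \<sigma>_sq: "\<sigma>\<^sup>2 = 1 / (2 * c)"
    using assms by (simp_all add: \<sigma>_def)
  have "exp (- c * x\<^sup>2) = sqrt (pi / c) * normal_density 0 \<sigma> x" for x
    unfolding normal_density_def \<sigma>_sq using assms by (simp add: field_simps real_sqrt_divide real_sqrt_mult)
  then show ?thesis
    using integrable_normal_density[OF \<open>\<sigma> > 0\<close>, of 0] integral_normal_density[OF \<open>\<sigma> > 0\<close>, of 0]
    by (simp add: has_bochner_integral_iff)
qed

lemma nn_integral_gaussian:
  fixes c :: real
  assumes "c > 0"
  shows "(\<integral>\<^sup>+x. ennreal (exp (- c * (norm x)\<^sup>2)) \<partial>(lborel :: 'a::euclidean_space measure))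
           = ennreal (sqrt (pi / c) ^ DIM('a))"
proof -
  have "ennreal (exp (- c * (norm x)\<^sup>2)) = (\<Prod>b\<in>Basis. ennreal (exp (- c * (x \<bullet> b)\<^sup>2)))"
    for x :: 'a
  proof -
    have "(norm x)\<^sup>2 = (\<Sum>b\<in>Basis. (x \<bullet> b)\<^sup>2)"
      using euclidean_inner[of x x] by (simp add: power2_norm_eq_inner[symmetric] power2_eq_square)
    then show ?thesis
      by (simp add: sum_distrib_left exp_sum[symmetric] sum_negf prod_ennreal)
  qed
  then have "(\<integral>\<^sup>+x. ennreal (exp (- c * (norm x)\<^sup>2)) \<partial>(lborel :: 'a measure))
      = (\<integral>\<^sup>+x. (\<Prod>b\<in>Basis. (\<lambda>t. ennreal (exp (- c * t\<^sup>2))) (x \<bullet> b)) \<partial>(lborel :: 'a measure))"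
    by simp
  also have "\<dots> = (\<Prod>b\<in>(Basis :: 'a set). \<integral>\<^sup>+t. ennreal (exp (- c * t\<^sup>2)) \<partial>lborel)"
    by (rule nn_integral_lborel_prod) auto
  also have "\<dots> = ennreal (sqrt (pi / c)) ^ DIM('a)"
    using has_bochner_integral_gaussian_real[OF assms]
    by (simp add: has_bochner_integral_iff nn_integral_eq_integral)
  finally show ?thesis
    using assms by (simp add: ennreal_power)
qed

lemma has_bochner_integral_gaussian:
  fixes c :: real
  assumes "c > 0"
  shows "has_bochner_integral (lborel :: 'a::euclidean_space measure)
           (\<lambda>x. exp (- c * (norm x)\<^sup>2)) (sqrt (pi / c) ^ DIM('a))"
  by (rule has_bochner_integral_nn_integral[OF _ _ _ nn_integral_gaussian[OF assms]]) (use assms in auto)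

lemma power_le_exp_mult_power:
  fixes u :: real
  assumes "u \<ge> 0"
  shows "u ^ m \<le> real m ^ m * exp u"
proof (cases "m = 0")
  case False
  have "(u / real m) ^ m \<le> (1 + u / real m) ^ m"
    using assms by (intro power_mono) auto
  also have "\<dots> \<le> exp u"
    using assms False by (intro exp_ge_one_plus_x_over_n_power_n) auto
  finally show ?thesis
    using False by (simp add: power_divide field_simps)
qed (use assms in simp)

lemma integrable_power_norm_gaussian:
  fixes \<kappa> :: real
  assumes "\<kappa> > 0"
  shows "integrable (lborel :: 'a::euclidean_space measure)
           (\<lambda>x. ((norm x)\<^sup>2) ^ m * exp (- \<kappa> * (norm x)\<^sup>2))"
proof (rule Bochner_Integration.integrable_bound)
  let ?M = "(2 * real m / \<kappa>) ^ m"
  show "integrable (lborel :: 'a measure) (\<lambda>x. ?M * exp (- (\<kappa> / 2) * (norm x)\<^sup>2))"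
    using has_bochner_integral_gaussian[of "\<kappa> / 2", THEN integrable.intros] assms
    by (intro integrable_mult_right) simp
  have "t ^ m * exp (- \<kappa> * t) \<le> ?M * exp (- (\<kappa> / 2) * t)" if "t \<ge> 0" for t :: real
  proof -
    \<comment> \<open>the polynomial factor is absorbed by half of the Gaussian decay\<close>
    have "(\<kappa> / 2) ^ m * t ^ m \<le> real m ^ m * exp (\<kappa> * t / 2)"
      using power_le_exp_mult_power[of "\<kappa> * t / 2" m] that assms
      by (simp add: power_mult_distrib power_divide)
    then have "t ^ m \<le> ?M * exp (\<kappa> * t / 2)"
      using assms by (simp add: power_divide power_mult_distrib field_simps)
    then have "t ^ m * exp (- \<kappa> * t) \<le> ?M * exp (\<kappa> * t / 2) * exp (- \<kappa> * t)"
      by (rule mult_right_mono) simp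
    also have "\<dots> = ?M * exp (- (\<kappa> / 2) * t)"
    proof -
      have "exp (\<kappa> * t / 2) * exp (- \<kappa> * t) = exp (- (\<kappa> / 2) * t)"
        unfolding mult_exp_exp by (simp add: algebra_simps)
      then show ?thesis
        by (metis mult.assoc)
    qed
    finally show ?thesis .
  qed
  then show "AE x in lborel. norm (((norm x)\<^sup>2) ^ m * exp (- \<kappa> * (norm x)\<^sup>2))
      \<le> norm (?M * exp (- (\<kappa> / 2) * (norm (x :: 'a))\<^sup>2))"
    using assms by (intro AE_I2) simp
qed measurable

definition weighted_tuples :: "nat set \<Rightarrow> (nat \<Rightarrow> nat) \<Rightarrow> nat \<Rightarrow> (nat \<Rightarrow> nat) set" where
  "weighted_tuples I w n = {j \<in> PiE I (\<lambda>_. {..n}). (\<Sum>l\<in>I. w l * j l) = n}"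

lemma fdb_tuples_eq_weighted_tuples: "fdb_tuples n = weighted_tuples {1..n} (\<lambda>l. l) n"
  unfolding fdb_tuples_def weighted_tuples_def by simp

lemma finite_weighted_tuples: "finite I \<Longrightarrow> finite (weighted_tuples I w n)"
  unfolding weighted_tuples_def
  by (rule finite_subset[of _ "PiE I (\<lambda>_. {..n})"]) (auto intro!: finite_PiE)

lemma fun_upd_in_weighted_tuples_insert:
  assumes "finite I" "a \<notin> I" "m \<le> n" "w a * m \<le> n" "j \<in> weighted_tuples I w (n - w a * m)"
  shows "j(a := m) \<in> weighted_tuples (insert a I) w n"
proof -
  have "(\<Sum>l\<in>insert a I. w l * (j(a := m)) l) = w a * m + (\<Sum>l\<in>I. w l * j l)"
    using assms(1,2) by (simp add: sum.insert) (intro sum.cong, auto)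
  then show ?thesis
    using assms unfolding weighted_tuples_def by (auto simp: PiE_iff extensional_def)
qed

lemma restrict_in_weighted_tuples:
  assumes "finite I" "a \<notin> I" "\<forall>l\<in>I. 0 < w l" "j \<in> weighted_tuples (insert a I) w n"
  shows "w a * j a \<le> n" and "restrict j I \<in> weighted_tuples I w (n - w a * j a)"
proof -
  have split: "w a * j a + (\<Sum>l\<in>I. w l * j l) = n"
    using assms unfolding weighted_tuples_def by simp
  then show "w a * j a \<le> n"
    by simp
  have "j l \<le> n - w a * j a" if "l \<in> I" for l
  proof -
    have "w l * j l \<le> (\<Sum>l\<in>I. w l * j l)"
      using that assms(1) by (intro member_le_sum) auto
    moreover have "j l \<le> w l * j l"
      using mult_le_mono1[of 1 "w l" "j l"] assms(3) that by (simp add: Suc_le_eq)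
    ultimately show ?thesis
      using split by linarith
  qed
  then show "restrict j I \<in> weighted_tuples I w (n - w a * j a)"
    using split unfolding weighted_tuples_def by auto
qed

lemma sum_weighted_tuples_insert:
  assumes "finite I" "a \<notin> I" "\<forall>l\<in>insert a I. 0 < w l"
  shows "(\<Sum>j\<in>weighted_tuples (insert a I) w n. F j)
       = (\<Sum>m | w a * m \<le> n. \<Sum>j\<in>weighted_tuples I w (n - w a * m). F (j(a := m)))"
proof -
  let ?M = "{m. w a * m \<le> n}"
  have bounded: "m \<le> n" if "m \<in> ?M" for m
  proof -
    have "1 * m \<le> w a * m"
      using assms(3) by (intro mult_le_mono1) simp
    moreover have "w a * m \<le> n"
      using that by simp
    ultimately show ?thesis
      by linarith
  qed
  then have "?M \<subseteq> {..n}"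
    by auto
  then have "finite ?M"
    by (rule finite_subset) simp
  then have "(\<Sum>m\<in>?M. \<Sum>j\<in>weighted_tuples I w (n - w a * m). F (j(a := m)))
      = (\<Sum>p\<in>Sigma ?M (\<lambda>m. weighted_tuples I w (n - w a * m)). F ((snd p)(a := fst p)))"
    using assms(1) by (subst sum.Sigma) (auto intro: finite_weighted_tuples simp: case_prod_beta)
  also have "\<dots> = (\<Sum>j\<in>weighted_tuples (insert a I) w n. F j)"
  proof (rule sum.reindex_bij_witness[where j = "\<lambda>p. (snd p)(a := fst p)" and i = "\<lambda>j. (j a, restrict j I)"])
    fix p assume p: "p \<in> Sigma ?M (\<lambda>m. weighted_tuples I w (n - w a * m))"
    then have "snd p \<in> extensional I"
      unfolding weighted_tuples_def by (auto simp: PiE_def)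
    then show "(((snd p)(a := fst p)) a, restrict ((snd p)(a := fst p)) I) = p"
      using \<open>a \<notin> I\<close> by (cases p) (auto simp: restrict_def extensional_def fun_eq_iff)
    from p have "fst p \<in> ?M" "snd p \<in> weighted_tuples I w (n - w a * fst p)"
      by auto
    then show "(snd p)(a := fst p) \<in> weighted_tuples (insert a I) w n"
      using fun_upd_in_weighted_tuples_insert[OF assms(1,2) bounded] by simp
  next
    fix j assume j: "j \<in> weighted_tuples (insert a I) w n"
    then have "j \<in> extensional (insert a I)"
      unfolding weighted_tuples_def by (auto simp: PiE_def)
    then show "(snd (j a, restrict j I))(a := fst (j a, restrict j I)) = j"
      using \<open>a \<notin> I\<close> by (auto simp: restrict_def extensional_def fun_eq_iff)
    have "\<forall>l\<in>I. 0 < w l"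
      using assms(3) by simp
    then show "(j a, restrict j I) \<in> Sigma ?M (\<lambda>m. weighted_tuples I w (n - w a * m))"
      using restrict_in_weighted_tuples[OF assms(1,2) _ j] by simp
  qed simp
  finally show ?thesis ..
qed

lemma sum_if_dvd_eq_sum_multiples:
  fixes w n :: nat
  assumes "0 < w"
  shows "(\<Sum>i=0..n. if w dvd i then f (i div w) else 0) = (\<Sum>m | w * m \<le> n. f m)"
proof -
  have "(\<Sum>i=0..n. if w dvd i then f (i div w) else 0) = (\<Sum>i\<in>{i\<in>{0..n}. w dvd i}. f (i div w))"
    by (rule sum.inter_filter[symmetric]) simp
  also have "\<dots> = (\<Sum>m | w * m \<le> n. f m)"
    by (rule sum.reindex_bij_witness[where i = "\<lambda>m. w * m" and j = "\<lambda>i. i div w"])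
      (use assms in auto)
  finally show ?thesis .
qed

text \<open>The power series of \<open>exp (c X\<^sup>l)\<close>.\<close>
definition fps_exp_X_power :: "nat \<Rightarrow> 'a::field_char_0 \<Rightarrow> 'a fps" where
  "fps_exp_X_power l c = Abs_fps (\<lambda>k. if l dvd k then c ^ (k div l) / fact (k div l) else 0)"

lemma fps_nth_prod_exp_X_power:
  assumes "finite I" "\<forall>l\<in>I. 0 < w l"
  shows "fps_nth (\<Prod>l\<in>I. fps_exp_X_power (w l) (c l)) n
           = (\<Sum>j\<in>weighted_tuples I w n. \<Prod>l\<in>I. c l ^ j l / fact (j l))"
  using assms
proof (induction I arbitrary: n rule: finite_induct)
  case empty
  have "weighted_tuples {} w n = (if n = 0 then {\<lambda>_. undefined} else {})"
    unfolding weighted_tuples_def by auto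
  then show ?case by simp
next
  case (insert a I)
  let ?P = "\<Prod>l\<in>I. fps_exp_X_power (w l) (c l)"
  let ?t = "\<lambda>J j. \<Prod>l\<in>J. c l ^ j l / fact (j l)"
  define F where "F m = c a ^ m / fact m * fps_nth ?P (n - w a * m)" for m
  have "fps_nth (fps_exp_X_power (w a) (c a)) i * fps_nth ?P (n - i)
      = (if w a dvd i then F (i div w a) else 0)" for i
    by (auto simp: fps_exp_X_power_def F_def)
  then have "fps_nth (\<Prod>l\<in>insert a I. fps_exp_X_power (w l) (c l)) n
      = (\<Sum>i=0..n. if w a dvd i then F (i div w a) else 0)"
    using insert.hyps by (simp add: fps_mult_nth)
  also have "\<dots> = (\<Sum>m | w a * m \<le> n. c a ^ m / fact m * fps_nth ?P (n - w a * m))"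
    using insert.prems by (simp add: sum_if_dvd_eq_sum_multiples F_def)
  also have "\<dots> = (\<Sum>m | w a * m \<le> n. \<Sum>j\<in>weighted_tuples I w (n - w a * m). ?t (insert a I) (j(a := m)))"
  proof (intro sum.cong refl)
    fix m
    have "?t (insert a I) (j(a := m)) = c a ^ m / fact m * ?t I j" for j
    proof -
      have "?t I (j(a := m)) = ?t I j"
        using insert.hyps(2) by (intro prod.cong) auto
      then show ?thesis
        using insert.hyps by simp
    qed
    then show "c a ^ m / fact m * fps_nth ?P (n - w a * m)
        = (\<Sum>j\<in>weighted_tuples I w (n - w a * m). ?t (insert a I) (j(a := m)))"
      using insert.IH insert.prems by (simp add: sum_distrib_left)
  qed
  also have "\<dots> = (\<Sum>j\<in>weighted_tuples (insert a I) w n. ?t (insert a I) j)"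
    by (rule sum_weighted_tuples_insert[symmetric]) (use insert in auto)
  finally show ?case .
qed

lemma fps_deriv_exp_X_power:
  assumes "0 < l"
  shows "fps_deriv (fps_exp_X_power l c) = fps_const (of_nat l * c) * (fps_X ^ (l - 1) * fps_exp_X_power l c)"
proof (rule fps_ext)
  fix k
  show "fps_nth (fps_deriv (fps_exp_X_power l c)) k = fps_nth (fps_const (of_nat l * c) * (fps_X ^ (l - 1) * fps_exp_X_power l c)) k"
  proof (cases "l dvd Suc k")
    case True
    then obtain m where m: "Suc k = l * Suc m"
      by (metis dvdE mult_0_right nat.distinct(1) not0_implies_Suc)
    then have "k - (l - 1) = l * m" and "\<not> k < l - 1"
      using assms by (simp_all add: algebra_simps)
    moreover have "of_nat (Suc k) * (c ^ Suc m / fact (Suc m)) = of_nat l * c * (c ^ m / fact m)"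
    proof -
      have cancel: "x \<noteq> 0 \<Longrightarrow> u * x * (v / (x * y)) = u * (v / y)" for u v x y :: 'a
        by simp
      show ?thesis
        unfolding m of_nat_mult fact_Suc power_Suc using cancel[of "of_nat (Suc m)"]
        by (simp add: mult_ac del: of_nat_Suc)
    qed
    ultimately show ?thesis
      using True m assms by (simp add: fps_exp_X_power_def fps_deriv_nth fps_X_power_mult_nth)
  next
    case False
    have "\<not> l dvd (k - (l - 1))" if "\<not> k < l - 1"
    proof
      assume "l dvd (k - (l - 1))"
      then have "l dvd (k - (l - 1) + l)" by simp
      also have "k - (l - 1) + l = Suc k" using that assms by simp
      finally show False using False by simp
    qed
    then show ?thesis
      using False by (simp add: fps_exp_X_power_def fps_deriv_nth fps_X_power_mult_nth)
  qed
qed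

definition fps_exp_poly :: "(nat \<Rightarrow> 'a::field_char_0) \<Rightarrow> nat \<Rightarrow> 'a fps" where
  "fps_exp_poly c N = (\<Prod>l=1..N. fps_exp_X_power l (c l))"

lemma fps_deriv_exp_poly:
  "fps_deriv (fps_exp_poly c N)
     = (\<Sum>l=1..N. fps_const (of_nat l * c l) * fps_X ^ (l - 1)) * fps_exp_poly c N"
proof (induction N)
  case (Suc N)
  have "fps_exp_poly c (Suc N) = fps_exp_poly c N * fps_exp_X_power (Suc N) (c (Suc N))"
    unfolding fps_exp_poly_def by (simp add: prod.cl_ivl_Suc)
  then show ?case
    by (simp add: sum.cl_ivl_Suc fps_deriv_mult Suc.IH fps_deriv_exp_X_power algebra_simps)
qed (simp add: fps_exp_poly_def)

lemma fps_exp_poly_nth_0: "fps_nth (fps_exp_poly c N) 0 = 1"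
  unfolding fps_exp_poly_def by (induction N) (auto simp: prod.cl_ivl_Suc fps_exp_X_power_def)

lemma fps_exp_poly_nth_Suc:
  assumes "k < N"
  shows "of_nat (Suc k) * fps_nth (fps_exp_poly c N) (Suc k)
           = (\<Sum>i=0..k. of_nat (Suc i) * c (Suc i) * fps_nth (fps_exp_poly c N) (k - i))"
proof -
  have poly_nth: "fps_nth (\<Sum>l=1..N. fps_const (of_nat l * c l) * fps_X ^ (l - 1)) i
      = (if i < N then of_nat (Suc i) * c (Suc i) else 0)" for i
  proof -
    have "fps_nth (\<Sum>l=1..N. fps_const (of_nat l * c l) * fps_X ^ (l - 1)) i
        = (\<Sum>l=1..N. if l = Suc i then of_nat l * c l else 0)"
      unfolding fps_sum_nth by (intro sum.cong) (auto simp: fps_X_power_mult_right_nth)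
    then show ?thesis by simp
  qed
  have "of_nat (Suc k) * fps_nth (fps_exp_poly c N) (Suc k) = fps_nth (fps_deriv (fps_exp_poly c N)) k"
    by (simp add: fps_deriv_nth)
  also have "\<dots> = (\<Sum>i=0..k. of_nat (Suc i) * c (Suc i) * fps_nth (fps_exp_poly c N) (k - i))"
    unfolding fps_deriv_exp_poly fps_mult_nth poly_nth
    using assms by (intro sum.cong) auto
  finally show ?thesis .
qed

lemma Leibniz_sum_Suc:
  fixes f g :: "nat \<Rightarrow> real"
  shows "(\<Sum>k=0..n. real (n choose k) * (f (Suc k) * g (n - k) + f k * g (Suc (n - k))))
       = (\<Sum>k=0..Suc n. real (Suc n choose k) * f k * g (Suc n - k))"
proof -
  have shifted: "(\<Sum>k=0..n. real (n choose k) * f k * g (Suc n - k))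
      = f 0 * g (Suc n) + (\<Sum>k=0..n. real (n choose Suc k) * f (Suc k) * g (n - k))"
  proof -
    have "(\<Sum>k=0..n. real (n choose k) * f k * g (Suc n - k))
        = (\<Sum>k=0..Suc n. real (n choose k) * f k * g (Suc n - k))"
      by (subst sum.atLeast0_atMost_Suc) simp
    also have "\<dots> = f 0 * g (Suc n) + (\<Sum>k=0..n. real (n choose Suc k) * f (Suc k) * g (n - k))"
      by (subst sum.atLeast0_atMost_Suc_shift) simp
    finally show ?thesis .
  qed
  have "(\<Sum>k=0..Suc n. real (Suc n choose k) * f k * g (Suc n - k))
      = f 0 * g (Suc n) + (\<Sum>k=0..n. real (Suc n choose Suc k) * f (Suc k) * g (n - k))"
    by (subst sum.atLeast0_atMost_Suc_shift) simp
  also have "\<dots> = f 0 * g (Suc n) + (\<Sum>k=0..n. real (n choose k) * f (Suc k) * g (n - k))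
      + (\<Sum>k=0..n. real (n choose Suc k) * f (Suc k) * g (n - k))"
    by (simp add: sum.distrib algebra_simps)
  also have "\<dots> = (\<Sum>k=0..n. real (n choose k) * f (Suc k) * g (n - k))
      + (\<Sum>k=0..n. real (n choose k) * f k * g (Suc n - k))"
    using shifted by simp
  also have "\<dots> = (\<Sum>k=0..n. real (n choose k) * (f (Suc k) * g (n - k) + f k * g (Suc (n - k))))"
    by (simp add: sum.distrib[symmetric] algebra_simps) (intro sum.cong, auto simp: Suc_diff_le)
  finally show ?thesis by simp
qed

lemma has_real_derivative_Leibniz_sum:
  fixes f g :: "nat \<Rightarrow> real \<Rightarrow> real"
  assumes f: "\<And>k. k \<le> n \<Longrightarrow> (f k has_real_derivative f (Suc k) x) (at x)"
    and g: "\<And>k. k \<le> n \<Longrightarrow> (g k has_real_derivative g (Suc k) x) (at x)"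
  shows "((\<lambda>x. \<Sum>k=0..n. real (n choose k) * f k x * g (n - k) x) has_real_derivative
          (\<Sum>k=0..Suc n. real (Suc n choose k) * f k x * g (Suc n - k) x)) (at x)"
proof -
  have "((\<lambda>x. \<Sum>k=0..n. real (n choose k) * f k x * g (n - k) x) has_real_derivative
          (\<Sum>k=0..n. real (n choose k) * (f (Suc k) x * g (n - k) x + f k x * g (Suc (n - k)) x))) (at x)"
  proof (rule DERIV_sum)
    fix k assume "k \<in> {0..n}"
    then have "((\<lambda>x. f k x * g (n - k) x) has_real_derivative
           f (Suc k) x * g (n - k) x + f k x * g (Suc (n - k)) x) (at x)"
      using DERIV_mult[OF f g[of "n - k"]] by (simp add: algebra_simps)
    from DERIV_cmult[OF this, of "real (n choose k)"]
    show "((\<lambda>x. real (n choose k) * f k x * g (n - k) x) has_real_derivative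
           real (n choose k) * (f (Suc k) x * g (n - k) x + f k x * g (Suc (n - k)) x)) (at x)"
      by (simp add: mult.assoc)
  qed
  then show ?thesis
    using Leibniz_sum_Suc[of n "\<lambda>k. f k x" "\<lambda>k. g k x"] by simp
qed

context
  fixes S :: "real set" and h :: "real \<Rightarrow> real" and g :: "nat \<Rightarrow> real \<Rightarrow> real"
  assumes open_S: "open S"
    and has_derivative_g: "\<And>k s. 0 < k \<Longrightarrow> s \<in> S \<Longrightarrow> (g k has_real_derivative g (Suc k) s) (at s)"
    and has_derivative_h: "\<And>s. s \<in> S \<Longrightarrow> (h has_real_derivative g 1 s * h s) (at s)"
begin

lemma higher_deriv_recurrence:
  "\<forall>s\<in>S. ((deriv ^^ m) h has_real_derivative (deriv ^^ Suc m) h s) (at s)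
     \<and> (deriv ^^ Suc m) h s = (\<Sum>k=0..m. real (m choose k) * g (Suc k) s * (deriv ^^ (m - k)) h s)"
proof (induction m rule: less_induct)
  case (less m)
  let ?R = "\<lambda>s. \<Sum>k=0..m. real (m choose k) * g (Suc k) s * (deriv ^^ (m - k)) h s"
  have has_derivative_R: "((deriv ^^ m) h has_real_derivative ?R s) (at s)" if "s \<in> S" for s
  proof (cases m)
    case 0
    then show ?thesis
      using has_derivative_h[OF that] by simp
  next
    case (Suc m')
    let ?L = "\<lambda>x. \<Sum>k=0..m'. real (m' choose k) * g (Suc k) x * (deriv ^^ (m' - k)) h x"
    have "(?L has_real_derivative ?R s) (at s)"
      unfolding Suc
    proof (rule has_real_derivative_Leibniz_sum[where f = "\<lambda>k. g (Suc k)" and g = "\<lambda>k. (deriv ^^ k) h"])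
      fix k assume "k \<le> m'"
      show "(g (Suc k) has_real_derivative g (Suc (Suc k)) s) (at s)"
        using has_derivative_g that by simp
      have "k < m" using \<open>k \<le> m'\<close> Suc by simp
      then show "((deriv ^^ k) h has_real_derivative (deriv ^^ Suc k) h s) (at s)"
        using less.IH that by blast
    qed
    moreover have "?L x = (deriv ^^ m) h x" if "x \<in> S" for x
      using less.IH[of m'] Suc that by simp
    ultimately show ?thesis
      by (rule has_field_derivative_transform_within_open[OF _ open_S \<open>s \<in> S\<close>])
  qed
  show ?case
  proof
    fix s assume "s \<in> S"
    note has_derivative_R[OF this]
    moreover from DERIV_imp_deriv[OF this] have "(deriv ^^ Suc m) h s = ?R s"
      by simp
    ultimately show "((deriv ^^ m) h has_real_derivative (deriv ^^ Suc m) h s) (at s)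
        \<and> (deriv ^^ Suc m) h s = ?R s"
      by simp
  qed
qed

lemma higher_deriv_eq_fps_exp_poly_nth:
  assumes "s \<in> S"
  shows "m \<le> N \<Longrightarrow> (deriv ^^ m) h s = h s * fact m * fps_nth (fps_exp_poly (\<lambda>l. g l s / fact l) N) m"
proof (induction m rule: less_induct)
  case (less m)
  let ?c = "\<lambda>l. g l s / fact l"
  let ?P = "fps_nth (fps_exp_poly ?c N)"
  show ?case
  proof (cases m)
    case 0
    then show ?thesis by (simp add: fps_exp_poly_nth_0)
  next
    case (Suc k)
    have binomial: "real (k choose i) * y * (H * fact (k - i) * p)
        = H * fact k * (real (Suc i) * (y / fact (Suc i)) * p)"
      if "i \<le> k" for i and y H p :: real
    proof -
      have "(fact (Suc i) :: real) = real (Suc i) * fact i"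
        by simp
      moreover have "(fact i :: real) > 0" "(fact (k - i) :: real) > 0"
        by simp_all
      ultimately show ?thesis
        using binomial_fact[OF that, where 'a = real] by (simp add: field_simps del: of_nat_Suc)
    qed
    have "(deriv ^^ m) h s = (\<Sum>i=0..k. real (k choose i) * g (Suc i) s * (deriv ^^ (k - i)) h s)"
      using higher_deriv_recurrence[of k] assms Suc by blast
    also have "\<dots> = (\<Sum>i=0..k. real (k choose i) * g (Suc i) s * (h s * fact (k - i) * ?P (k - i)))"
      using less Suc by (intro sum.cong refl) auto
    also have "\<dots> = (\<Sum>i=0..k. h s * fact k * (real (Suc i) * ?c (Suc i) * ?P (k - i)))"
      by (intro sum.cong refl binomial) simp
    also have "\<dots> = h s * fact k * (\<Sum>i=0..k. real (Suc i) * ?c (Suc i) * ?P (k - i))"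
      by (simp add: sum_distrib_left)
    also have "\<dots> = h s * fact k * (real (Suc k) * ?P (Suc k))"
      using less.prems Suc by (subst fps_exp_poly_nth_Suc) simp_all
    also have "\<dots> = h s * fact m * ?P m"
      unfolding Suc by (simp add: algebra_simps)
    finally show ?thesis .
  qed
qed

theorem higher_deriv_Faa_di_Bruno:
  assumes "s \<in> S"
  shows "(deriv ^^ n) h s = h s *
    (\<Sum>j\<in>fdb_tuples n. fact n / (\<Prod>l=1..n. fact (j l)) * (\<Prod>l=1..n. (1 / fact l ^ j l) * g l s ^ j l))"
proof -
  let ?c = "\<lambda>l. g l s / fact l"
  have "fps_nth (fps_exp_poly ?c n) n = (\<Sum>j\<in>fdb_tuples n. \<Prod>l=1..n. ?c l ^ j l / fact (j l))"
    unfolding fps_exp_poly_def fdb_tuples_eq_weighted_tuples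
    by (rule fps_nth_prod_exp_X_power) auto
  moreover have "(\<Prod>l=1..n. ?c l ^ j l / fact (j l))
      = (\<Prod>l=1..n. (1 / fact l ^ j l) * g l s ^ j l) / (\<Prod>l=1..n. fact (j l))" for j
    by (subst prod_dividef[symmetric]) (intro prod.cong refl, simp add: power_divide)
  ultimately show ?thesis
    using higher_deriv_eq_fps_exp_poly_nth[OF assms, of n n] by (simp add: sum_distrib_left mult_ac)
qed

end

definition powr_higher_deriv :: "real \<Rightarrow> nat \<Rightarrow> real \<Rightarrow> real" where
  "powr_higher_deriv a l s = s powr (a - real l) * (\<Prod>n<l. a - real n)"

lemma has_real_derivative_powr_higher_deriv:
  assumes "0 < s"
  shows "(powr_higher_deriv a l has_real_derivative powr_higher_deriv a (Suc l) s) (at s)"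
proof -
  have "((\<lambda>s. s powr (a - real l) * (\<Prod>n<l. a - real n)) has_real_derivative
          (a - real l) * s powr (a - real l - 1) * (\<Prod>n<l. a - real n)) (at s)"
    by (rule DERIV_cmult_right[OF has_real_derivative_powr[OF assms]])
  moreover have "(a - real l) * s powr (a - real l - 1) * (\<Prod>n<l. a - real n) = powr_higher_deriv a (Suc l) s"
    unfolding powr_higher_deriv_def by (simp add: algebra_simps)
  ultimately show ?thesis
    unfolding powr_higher_deriv_def[abs_def] by simp
qed

lemma has_real_derivative_LapI:
  assumes "0 < s"
  shows "(LapI C \<alpha> has_real_derivative - C * powr_higher_deriv (2 / \<alpha>) 1 s * LapI C \<alpha> s) (at s)"
proof -
  have "((\<lambda>s. exp (- (s powr (2 / \<alpha>)) * C)) has_real_derivative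
          exp (- (s powr (2 / \<alpha>)) * C) * (- ((2 / \<alpha>) * s powr (2 / \<alpha> - 1)) * C)) (at s)"
    using assms by (intro derivative_eq_intros has_real_derivative_powr) auto
  then show ?thesis
    unfolding LapI_def[abs_def] powr_higher_deriv_def by (simp add: algebra_simps)
qed

lemma higher_deriv_LapI:
  assumes "0 < s"
  shows "(deriv ^^ n) (LapI C \<alpha>) s = LapI C \<alpha> s *
    (\<Sum>j\<in>fdb_tuples n. fact n / (\<Prod>l=1..n. fact (j l)) *
       (\<Prod>l=1..n. (1 / fact l ^ j l) * (- C * s powr (2 / \<alpha> - real l) * (\<Prod>m<l. 2 / \<alpha> - real m)) ^ j l))"
proof -
  have "(deriv ^^ n) (LapI C \<alpha>) s = LapI C \<alpha> s *
    (\<Sum>j\<in>fdb_tuples n. fact n / (\<Prod>l=1..n. fact (j l)) *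
       (\<Prod>l=1..n. (1 / fact l ^ j l) * (- C * powr_higher_deriv (2 / \<alpha>) l s) ^ j l))"
  proof (rule higher_deriv_Faa_di_Bruno[where S = "{0<..}"])
    show "((\<lambda>s. - C * powr_higher_deriv (2 / \<alpha>) k s) has_real_derivative
            - C * powr_higher_deriv (2 / \<alpha>) (Suc k) s) (at s)" if "s \<in> {0<..}" for k s
    proof -
      have "0 < s" using that by simp
      from DERIV_cmult[OF has_real_derivative_powr_higher_deriv[OF this, where a = "2 / \<alpha>" and l = k],
          where c = "- C"]
      show ?thesis by simp
    qed
  qed (use assms has_real_derivative_LapI in auto)
  then show ?thesis
    by (simp add: powr_higher_deriv_def mult.assoc)
qed

lemma Ccoef_pos:
  assumes "2 < \<alpha>" "1 \<le> \<Psi>"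
  shows "0 < Ccoef \<alpha> \<Psi>"
proof -
  have "0 < (\<Sum>m = 1..\<Psi>. real (\<Psi> choose m) * Beta (real \<Psi> - real m + 2 / \<alpha>) (real m - 2 / \<alpha>))"
  proof (rule sum_pos)
    fix m assume "m \<in> {1..\<Psi>}"
    have "2 / \<alpha> < 1" "0 < 2 / \<alpha>"
      using assms by (auto simp: field_simps)
    moreover have "1 \<le> real m" "real m \<le> real \<Psi>"
      using \<open>m \<in> {1..\<Psi>}\<close> by auto
    ultimately have "0 < real \<Psi> - real m + 2 / \<alpha>" "0 < real m - 2 / \<alpha>"
      by linarith+
    then have "0 < Beta (real \<Psi> - real m + 2 / \<alpha>) (real m - 2 / \<alpha>)"
      unfolding Beta_def by (simp add: add_pos_pos)
    then show "0 < real (\<Psi> choose m) * Beta (real \<Psi> - real m + 2 / \<alpha>) (real m - 2 / \<alpha>)"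
      using \<open>m \<in> {1..\<Psi>}\<close> by simp
  qed (use assms in auto)
  then show ?thesis
    unfolding Ccoef_def using assms by simp
qed

lemma Ctot_pos:
  assumes "\<And>j. j \<in> {1..K} \<Longrightarrow> 0 < lam j \<and> 0 < P j \<and> 1 \<le> \<Psi> j" "2 < \<alpha>" "1 \<le> K"
  shows "0 < Ctot K lam P \<alpha> \<Psi>"
  unfolding Ctot_def
proof (rule sum_pos)
  fix j assume "j \<in> {1..K}"
  with assms(1) have "0 < lam j" "0 < P j" "1 \<le> \<Psi> j"
    by auto
  then show "0 < lam j * P j powr (2 / \<alpha>) * Ccoef \<alpha> (\<Psi> j)"
    using Ccoef_pos[OF assms(2)] by simp
qed (use assms in auto)

lemma sx_pos: "0 < \<beta> \<Longrightarrow> 0 < P \<Longrightarrow> x \<noteq> 0 \<Longrightarrow> 0 < sx \<beta> P \<alpha> x"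
  unfolding sx_def by simp

lemma sx_powr_two_div:
  assumes "0 < \<beta>" "0 < P" "0 < \<alpha>"
  shows "sx \<beta> P \<alpha> x powr (2 / \<alpha>) = (\<beta> / P) powr (2 / \<alpha>) * (norm x)\<^sup>2"
proof -
  have "sx \<beta> P \<alpha> x = (\<beta> / P) * norm x powr \<alpha>"
    unfolding sx_def by simp
  then have "sx \<beta> P \<alpha> x powr (2 / \<alpha>) = (\<beta> / P) powr (2 / \<alpha>) * (norm x powr \<alpha>) powr (2 / \<alpha>)"
    by (simp only: powr_mult)
  also have "(norm x powr \<alpha>) powr (2 / \<alpha>) = (norm x)\<^sup>2"
    using assms by (simp add: powr_powr)
  finally show ?thesis .
qed

lemma integral_LapI_sx:
  assumes "0 < C" "0 < \<beta>" "0 < P" "0 < \<alpha>"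
  shows "(\<integral>x. LapI C \<alpha> (sx \<beta> P \<alpha> x) \<partial>(lborel :: (real ^ 2) measure))
           = pi * P powr (2 / \<alpha>) * \<beta> powr (- 2 / \<alpha>) / C"
proof -
  define b where "b = (\<beta> / P) powr (2 / \<alpha>)"
  have "0 < b"
    unfolding b_def using assms by simp
  have "LapI C \<alpha> (sx \<beta> P \<alpha> x) = exp (- (C * b) * (norm x)\<^sup>2)" for x :: "real ^ 2"
    unfolding LapI_def sx_powr_two_div[OF assms(2-4)] b_def by (simp add: mult_ac)
  then have "(\<integral>x. LapI C \<alpha> (sx \<beta> P \<alpha> x) \<partial>(lborel :: (real ^ 2) measure)) = pi / (C * b)"
    using has_bochner_integral_gaussian[of "C * b", where 'a = "real ^ 2"] assms \<open>0 < b\<close>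
    by (simp add: has_bochner_integral_iff)
  also have "\<dots> = pi * P powr (2 / \<alpha>) * \<beta> powr (- 2 / \<alpha>) / C"
  proof -
    define B Q where "B = \<beta> powr (2 / \<alpha>)" and "Q = P powr (2 / \<alpha>)"
    have "0 < B" "0 < Q"
      unfolding B_def Q_def using assms by auto
    moreover have "\<beta> powr (- 2 / \<alpha>) = 1 / B"
      unfolding B_def by (simp add: powr_minus_divide[symmetric])
    moreover have "b = B / Q"
      unfolding b_def B_def Q_def by (rule powr_divide)
    ultimately show ?thesis
      unfolding Q_def[symmetric] using assms by simp
  qed
  finally show ?thesis .
qed

text \<open>The \<open>j\<close>-th Faa di Bruno summand of the \<open>i\<close>-th term of \<open>\<A>\<^sub>k\<close>, as a function of
  \<open>s = s\<^sub>x\<close>.\<close>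
definition fdb_term :: "real \<Rightarrow> real \<Rightarrow> nat \<Rightarrow> (nat \<Rightarrow> nat) \<Rightarrow> real \<Rightarrow> real" where
  "fdb_term C \<alpha> i j s = (- s) ^ i * exp (- C * s powr (2 / \<alpha>)) *
     (\<Prod>l=1..i. (1 / fact l ^ j l) * (- C * s powr (2 / \<alpha> - real l) * (\<Prod>n<l. 2 / \<alpha> - real n)) ^ j l)"

lemma power_prod_powr_fdb_tuple:
  assumes "0 < s" "j \<in> fdb_tuples i"
  shows "s ^ i * (\<Prod>l=1..i. (s powr (a - real l)) ^ j l) = (s powr a) ^ (\<Sum>l=1..i. j l)"
proof -
  have "real i = (\<Sum>l=1..i. real l * real (j l))"
    using assms(2) unfolding fdb_tuples_def by (simp flip: of_nat_mult of_nat_sum)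
  then have exponent: "real i + (\<Sum>l=1..i. real (j l) * (a - real l)) = real (\<Sum>l=1..i. j l) * a"
    by (simp add: sum.distrib[symmetric] sum_distrib_left sum_distrib_right algebra_simps)
  have "s ^ i * (\<Prod>l=1..i. (s powr (a - real l)) ^ j l)
      = s powr (real i + (\<Sum>l=1..i. real (j l) * (a - real l)))"
    using assms(1) by (simp add: powr_realpow powr_power powr_sum powr_add)
  also have "\<dots> = (s powr a) ^ (\<Sum>l=1..i. j l)"
    unfolding exponent using assms(1) by (simp add: powr_power)
  finally show ?thesis .
qed

lemma fdb_term_eq:
  assumes "0 < s" "j \<in> fdb_tuples i"
  shows "fdb_term C \<alpha> i j s
    = (- 1) ^ i * (\<Prod>l=1..i. (1 / fact l ^ j l) * (- C * (\<Prod>n<l. 2 / \<alpha> - real n)) ^ j l)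
        * (s powr (2 / \<alpha>)) ^ (\<Sum>l=1..i. j l) * exp (- C * s powr (2 / \<alpha>))"
proof -
  have "(- C * A * B) ^ n = (- C * B) ^ n * A ^ n" for A B :: real and n :: nat
  proof -
    have "- C * A * B = (- C * B) * A"
      by simp
    then show ?thesis
      by (simp only: power_mult_distrib)
  qed
  then have "(\<Prod>l=1..i. (1 / fact l ^ j l) * (- C * s powr (2 / \<alpha> - real l) * (\<Prod>n<l. 2 / \<alpha> - real n)) ^ j l)
      = (\<Prod>l=1..i. (1 / fact l ^ j l) * (- C * (\<Prod>n<l. 2 / \<alpha> - real n)) ^ j l)
          * (\<Prod>l=1..i. (s powr (2 / \<alpha> - real l)) ^ j l)"
    by (simp only: prod.distrib[symmetric] mult.assoc)
  then show ?thesis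
    unfolding fdb_term_def
    using power_prod_powr_fdb_tuple[OF assms, of "2 / \<alpha>"]
    by (simp add: power_minus[of s] mult_ac)
qed

lemma integrable_fdb_term:
  assumes "0 < C" "0 < \<beta>" "0 < P" "0 < \<alpha>" "j \<in> fdb_tuples i"
  shows "integrable (lborel :: (real ^ 2) measure) (\<lambda>x. fdb_term C \<alpha> i j (sx \<beta> P \<alpha> x))"
proof (rule integrable_cong_AE_imp)
  define b where "b = (\<beta> / P) powr (2 / \<alpha>)"
  define m where "m = (\<Sum>l=1..i. j l)"
  define K where "K = (- 1) ^ i * (\<Prod>l=1..i. (1 / fact l ^ j l) * (- C * (\<Prod>n<l. 2 / \<alpha> - real n)) ^ j l) * b ^ m"
  have "0 < C * b"
    unfolding b_def using assms by simp
  then show "integrable lborel (\<lambda>x::real ^ 2. K * (((norm x)\<^sup>2) ^ m * exp (- (C * b) * (norm x)\<^sup>2)))"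
    by (intro integrable_mult_right integrable_power_norm_gaussian)
  show "(\<lambda>x::real ^ 2. fdb_term C \<alpha> i j (sx \<beta> P \<alpha> x)) \<in> borel_measurable lborel"
    unfolding fdb_term_def sx_def by measurable
  have eq: "fdb_term C \<alpha> i j (sx \<beta> P \<alpha> x) = K * (((norm x)\<^sup>2) ^ m * exp (- (C * b) * (norm x)\<^sup>2))"
    if "x \<noteq> 0" for x :: "real ^ 2"
    using fdb_term_eq[OF sx_pos[OF assms(2,3) that, where \<alpha> = \<alpha>] assms(5), where C = C and \<alpha> = \<alpha>]
    unfolding sx_powr_two_div[OF assms(2-4)] K_def m_def b_def
    by (simp add: power_mult_distrib mult_ac)
  show "AE x in lborel. K * (((norm x)\<^sup>2) ^ m * exp (- (C * b) * (norm x)\<^sup>2))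
      = fdb_term C \<alpha> i j (sx \<beta> P \<alpha> (x :: real ^ 2))"
    using AE_lborel_singleton[of "0 :: real ^ 2"] by eventually_elim (simp add: eq)
qed

lemma integral_higher_deriv_LapI_sx:
  assumes "0 < C" "0 < \<beta>" "0 < P" "0 < \<alpha>"
  shows "(\<integral>x. (- sx \<beta> P \<alpha> x) ^ i * (deriv ^^ i) (LapI C \<alpha>) (sx \<beta> P \<alpha> x) \<partial>(lborel :: (real ^ 2) measure))
    = (\<Sum>j\<in>fdb_tuples i. fact i / (\<Prod>l=1..i. fact (j l)) *
         (\<integral>x. fdb_term C \<alpha> i j (sx \<beta> P \<alpha> x) \<partial>(lborel :: (real ^ 2) measure)))"
proof -
  let ?S = "sx \<beta> P \<alpha>"
  let ?F = "\<lambda>x. \<Sum>j\<in>fdb_tuples i. fact i / (\<Prod>l=1..i. fact (j l)) * fdb_term C \<alpha> i j (?S x)"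
  define v where "v = (- ?S 0) ^ i * (deriv ^^ i) (LapI C \<alpha>) (?S 0)"
  have finite: "finite (fdb_tuples i)"
    unfolding fdb_tuples_eq_weighted_tuples by (simp add: finite_weighted_tuples)
  have "(- ?S x) ^ i * (deriv ^^ i) (LapI C \<alpha>) (?S x) = ?F x" if "x \<noteq> 0" for x
    using higher_deriv_LapI[OF sx_pos[OF assms(2,3) that]]
    by (simp add: sum_distrib_left fdb_term_def LapI_def mult_ac)
  \<comment> \<open>\<open>(deriv ^^ i) (LapI C \<alpha>)\<close> is not known to be measurable, so the exceptional point
      \<open>x = 0\<close> is split off before comparing integrands almost everywhere\<close>
  then have "(\<lambda>x. (- ?S x) ^ i * (deriv ^^ i) (LapI C \<alpha>) (?S x)) = (\<lambda>x. if x = 0 then v else ?F x)"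
    by (auto simp: v_def)
  then have "(\<integral>x. (- ?S x) ^ i * (deriv ^^ i) (LapI C \<alpha>) (?S x) \<partial>(lborel :: (real ^ 2) measure))
      = (\<integral>x. (if x = 0 then v else ?F x) \<partial>lborel)"
    by (simp only:)
  also have "\<dots> = (\<integral>x. ?F x \<partial>lborel)"
  proof (rule integral_cong_AE)
    show "AE x in (lborel :: (real ^ 2) measure). (if x = 0 then v else ?F x) = ?F x"
      using AE_lborel_singleton[of "0 :: real ^ 2"] by eventually_elim simp
  qed (unfold fdb_term_def sx_def; measurable)+
  also have "\<dots> = (\<Sum>j\<in>fdb_tuples i. fact i / (\<Prod>l=1..i. fact (j l)) *
      (\<integral>x. fdb_term C \<alpha> i j (?S x) \<partial>(lborel :: (real ^ 2) measure)))"
    using finite integrable_fdb_term[OF assms] by (simp add: Bochner_Integration.integral_sum)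
  finally show ?thesis .
qed

theorem corollary5:
  fixes K :: nat and lam P \<beta> :: "nat \<Rightarrow> real" and \<alpha> :: real
    and \<Delta> \<Psi> :: "nat \<Rightarrow> nat" and k :: nat
  assumes "\<And>j. j \<in> {1..K} \<Longrightarrow> lam j > 0"
    and "\<And>j. j \<in> {1..K} \<Longrightarrow> P j > 0"
    and "\<And>j. j \<in> {1..K} \<Longrightarrow> \<beta> j > 0"
    and "\<And>j. j \<in> {1..K} \<Longrightarrow> \<Delta> j \<ge> 1"
    and "\<And>j. j \<in> {1..K} \<Longrightarrow> \<Psi> j \<ge> 1"
    and "\<alpha> > 2"
    and "k \<in> {1..K}"
  shows "(\<Delta> k = 1 \<longrightarrow>
            Ak (Ctot K lam P \<alpha> \<Psi>) \<alpha> (\<beta> k) (P k) (\<Delta> k)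
              = pi * P k powr (2 / \<alpha>) * \<beta> k powr (- 2 / \<alpha>) / Ctot K lam P \<alpha> \<Psi>)
       \<and> (\<Delta> k > 1 \<longrightarrow>
            Ak (Ctot K lam P \<alpha> \<Psi>) \<alpha> (\<beta> k) (P k) (\<Delta> k)
              = (\<Sum>i < \<Delta> k. 1 / fact i *
                   (\<Sum>j \<in> fdb_tuples i. fact i / (\<Prod>l = 1..i. fact (j l)) *
                      (\<integral>x. (- sx (\<beta> k) (P k) \<alpha> x) ^ i
                            * exp (- Ctot K lam P \<alpha> \<Psi> * sx (\<beta> k) (P k) \<alpha> x powr (2 / \<alpha>))
                            * (\<Prod>l = 1..i. (1 / fact l ^ j l) *
                                 (- Ctot K lam P \<alpha> \<Psi> * sx (\<beta> k) (P k) \<alpha> x powr (2 / \<alpha> - real l)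
                                   * (\<Prod>n < l. 2 / \<alpha> - real n)) ^ j l)
                        \<partial>(lborel :: (real ^ 2) measure)))))"
proof -
  have C: "0 < Ctot K lam P \<alpha> \<Psi>"
    using assms(1,2,5,6,7) by (intro Ctot_pos) auto
  have pos: "0 < \<beta> k" "0 < P k" "0 < \<alpha>"
    using assms(2,3,6,7) by auto
  show ?thesis
  proof (intro conjI impI)
    assume "\<Delta> k = 1"
    then show "Ak (Ctot K lam P \<alpha> \<Psi>) \<alpha> (\<beta> k) (P k) (\<Delta> k)
        = pi * P k powr (2 / \<alpha>) * \<beta> k powr (- 2 / \<alpha>) / Ctot K lam P \<alpha> \<Psi>"
      unfolding Ak_def using integral_LapI_sx[OF C pos] by simp
  qed (unfold Ak_def integral_higher_deriv_LapI_sx[OF C pos] fdb_term_def, rule refl)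
qed

end
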